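(* Let $\kappa$ be a regular uncountable cardinal, $\vec C$ a $C$-sequence over $\kappa$ and $\rho_0$ the corresponding walks function. For all $\alpha<\beta<\kappa$ such that $\rho_{0\alpha}$ and $\rho_{0\beta}$ are incomparable (neither is a subset of the other), $\Delta(\rho_{0\alpha},\rho_{0\beta})\notin V(\vec C)$.
   Context: A $C$-sequence over $\kappa$ is $\langle C_\delta\mid\delta<\kappa\rangle$, each $C_\delta$ a closed subset of $\delta$ with $\sup(C_\delta)=\sup(\delta)$. Walks: $\mathrm{Tr}(\beta,\gamma)(0)=\gamma$, $\mathrm{Tr}(\beta,\gamma)(n)=\min(C_{\mathrm{Tr}(\beta,\gamma)(n-1)}\setminus\beta)$ if $\mathrm{Tr}(\beta,\gamma)(n-1)>\beta$, else $\beta$; $\rho_2(\beta,\gamma)$ least $l$ with $\mathrm{Tr}(\beta,\gamma)(l)=\beta$; $\rho_0(\beta,\gamma)=\langle\mathrm{otp}(C_{\mathrm{Tr}(\beta,\gamma)(n)}\cap\beta)\mid n<\rho_2(\beta,\gamma)\rangle$. The fiber $\rho_{0\delta}:\delta\to{}^{<\omega}\kappa$ is $\rho_{0\delta}(\xi)=\rho_0(\xi,\delta)$. For functions $f,g$ with ordinal domains, $\Delta(f,g)=\min\{\mathrm{dom}(f),\mathrm{dom}(g),\delta\mid\delta\in\mathrm{dom}(f)\cap\mathrm{dom}(g),\ f(\delta)\ne g(\delta)\}$. $\mathrm{acc}(\kappa)$ is the set of nonzero limit ordinals below $\kappa$, and $V(\vec C)=\{\delta\in\mathrm{acc}(\kappa)\mid\forall\alpha\in(\delta,\kappa)\,\forall\epsilon<\delta\,[C_\delta\cap[\epsilon,\delta)\ne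 C_\alpha\cap[\epsilon,\delta)]\}$. *)

theory Defs
  imports Main "HOL-Library.Countable_Set"
begin

text \<open>Ordinals below kappa are modelled as the elements of a well-ordered type 'a
whose order type is kappa.  The order type of UNIV is a regular uncountable cardinal:\<close>

definition regular_uncountable_cardinal_type :: "'a::wellorder itself \<Rightarrow> bool" where
  "regular_uncountable_cardinal_type (T :: 'a itself) \<longleftrightarrow>
     \<not> countable (UNIV :: 'a set) \<and>
     (\<forall>a::'a. ordLess2 (card_of {..<a}) (card_of (UNIV :: 'a set))) \<and>
     (\<forall>S::'a set. (\<forall>a. \<exists>s\<in>S. a \<le> s) \<longrightarrow> ordIso2 (card_of S) (card_of (UNIV :: 'a set)))"

definition ord_sup :: "'a::wellorder set \<Rightarrow> 'a" where
  "ord_sup S = (LEAST x. \<forall>y\<in>S. y \<le> x)"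

definition acc :: "'a::wellorder set" where
  "acc = {\<delta>. (\<exists>y. y < \<delta>) \<and> (\<forall>y<\<delta>. \<exists>z. y < z \<and> z < \<delta>)}"

definition closed_subset :: "'a::wellorder set \<Rightarrow> 'a \<Rightarrow> bool" where
  "closed_subset C \<delta> \<longleftrightarrow> C \<subseteq> {..<\<delta>} \<and>
     (\<forall>\<gamma><\<delta>. \<gamma> \<in> acc \<and> (\<forall>y<\<gamma>. \<exists>c\<in>C. y \<le> c \<and> c < \<gamma>) \<longrightarrow> \<gamma> \<in> C)"

definition C_sequence :: "('a::wellorder \<Rightarrow> 'a set) \<Rightarrow> bool" where
  "C_sequence C \<longleftrightarrow> (\<forall>\<delta>. closed_subset (C \<delta>) \<delta> \<and> ord_sup (C \<delta>) = ord_sup {..<\<delta>})"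

primrec Tr :: "('a::wellorder \<Rightarrow> 'a set) \<Rightarrow> 'a \<Rightarrow> 'a \<Rightarrow> nat \<Rightarrow> 'a" where
  "Tr C \<beta> \<gamma> 0 = \<gamma>"
| "Tr C \<beta> \<gamma> (Suc n) =
     (if \<beta> < Tr C \<beta> \<gamma> n then (LEAST x. x \<in> C (Tr C \<beta> \<gamma> n) \<and> \<beta> \<le> x) else \<beta>)"

definition rho2 :: "('a::wellorder \<Rightarrow> 'a set) \<Rightarrow> 'a \<Rightarrow> 'a \<Rightarrow> nat" where
  "rho2 C \<beta> \<gamma> = (LEAST l. Tr C \<beta> \<gamma> l = \<beta>)"

text \<open>order type of a set of ordinals (bounded below kappa)\<close>
definition otp :: "'a::wellorder set \<Rightarrow> 'a" where
  "otp S = (THE \<gamma>. \<exists>f. bij_betw f S {..<\<gamma>} \<and> strict_mono_on S f)"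

definition rho0 :: "('a::wellorder \<Rightarrow> 'a set) \<Rightarrow> 'a \<Rightarrow> 'a \<Rightarrow> 'a list" where
  "rho0 C \<beta> \<gamma> = map (\<lambda>n. otp (C (Tr C \<beta> \<gamma> n) \<inter> {..<\<beta>})) [0..<rho2 C \<beta> \<gamma>]"

definition rho0_fiber :: "('a::wellorder \<Rightarrow> 'a set) \<Rightarrow> 'a \<Rightarrow> 'a \<Rightarrow> 'a list option" where
  "rho0_fiber C \<delta> = (\<lambda>\<xi>. if \<xi> < \<delta> then Some (rho0 C \<xi> \<delta>) else None)"

definition Delta :: "('a::wellorder \<Rightarrow> 'b option) \<Rightarrow> ('a \<Rightarrow> 'b option) \<Rightarrow> 'a" where
  "Delta f g = (LEAST x. dom f = {..<x} \<or> dom g = {..<x} \<or>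
                        (x \<in> dom f \<inter> dom g \<and> f x \<noteq> g x))"

definition V :: "('a::wellorder \<Rightarrow> 'a set) \<Rightarrow> 'a set" where
  "V C = {\<delta> \<in> acc. \<forall>\<alpha>. \<delta> < \<alpha> \<longrightarrow>
             (\<forall>\<epsilon><\<delta>. C \<delta> \<inter> {\<epsilon>..<\<delta>} \<noteq> C \<alpha> \<inter> {\<epsilon>..<\<delta>})}"

end

theory Submission
  imports Defs
begin

(*
  Let \<delta> = Delta (rho0_fiber C \<alpha>) (rho0_fiber C \<beta>); the fibers agree below \<delta> and differ at \<delta>.
  For a limit \<delta> \<le> \<gamma>, the walk from \<gamma> to \<delta> reaches a first point \<gamma>' with C \<gamma>' cofinal
  in \<delta>, and for \<xi> in a tail of \<delta> the walk from \<gamma> to \<xi> follows it up to \<gamma>':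
  rho0 C \<xi> \<gamma> = p @ rho0 C \<xi> \<gamma>'.  Doing this for \<alpha> and \<beta>, a length count at points of
  C \<gamma>1 and C \<gamma>2 forces p1 = p2; as a walk has length one exactly when \<xi> \<in> C \<gamma>, the sets
  C \<gamma>1 and C \<gamma>2 then agree on a tail of \<delta>.  Membership of \<delta> in V C rules out
  \<gamma>1 = \<delta> < \<gamma>2; if both \<gamma>i exceed \<delta>, the last steps otp (C \<gamma>i \<inter> {..<\<delta>}) agree because
  the first steps of the walks to the tail agree.  So rho0 C \<delta> \<alpha> = rho0 C \<delta> \<beta>.
*)

definition strict_mono_bij_betw :: "('a::linorder \<Rightarrow> 'b::linorder) \<Rightarrow> 'a set \<Rightarrow> 'b set \<Rightarrow> bool" where
  "strict_mono_bij_betw f S T \<longleftrightarrow> bij_betw f S T \<and> strict_mono_on S f"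

lemma strict_mono_bij_betw_comp:
  assumes "strict_mono_bij_betw f S T" and "strict_mono_bij_betw g T U"
  shows "strict_mono_bij_betw (g \<circ> f) S U"
proof -
  have "strict_mono_on S (g \<circ> f)"
    using assms unfolding strict_mono_bij_betw_def
    by (intro strict_mono_onI) (metis bij_betwE strict_mono_onD comp_apply)
  then show ?thesis
    using assms unfolding strict_mono_bij_betw_def by (auto intro: bij_betw_trans)
qed

lemma strict_mono_bij_betw_the_inv_into:
  assumes "strict_mono_bij_betw f S T"
  shows "strict_mono_bij_betw (the_inv_into S f) T S"
proof -
  have bij: "bij_betw f S T" and mono: "strict_mono_on S f"
    using assms unfolding strict_mono_bij_betw_def by auto
  have "the_inv_into S f x < the_inv_into S f y" if "x \<in> T" "y \<in> T" "x < y" for x y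
  proof -
    have "the_inv_into S f x \<in> S" "the_inv_into S f y \<in> S"
      using that bij_betw_the_inv_into[OF bij] by (auto dest: bij_betwE)
    moreover have "f (the_inv_into S f x) = x" "f (the_inv_into S f y) = y"
      using that f_the_inv_into_f_bij_betw[OF bij] by auto
    ultimately show ?thesis
      using strict_mono_on_less[OF mono] \<open>x < y\<close> by metis
  qed
  then show ?thesis
    using bij_betw_the_inv_into[OF bij] unfolding strict_mono_bij_betw_def
    by (auto intro: strict_mono_onI)
qed

lemma strict_mono_on_ge_self:
  fixes h :: "'a::wellorder \<Rightarrow> 'a"
  assumes mono: "strict_mono_on S h" and down_closed: "\<And>x y. x \<in> S \<Longrightarrow> y < x \<Longrightarrow> y \<in> S"
  shows "x \<in> S \<Longrightarrow> x \<le> h x"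
proof (induction x rule: less_induct)
  case (less x)
  show ?case
  proof (rule ccontr)
    assume "\<not> x \<le> h x"
    then have "h x < x" by simp
    with less.prems down_closed have "h x \<in> S" by blast
    with less.IH \<open>h x < x\<close> have "h x \<le> h (h x)" by blast
    moreover have "h (h x) < h x"
      using strict_mono_onD[OF mono \<open>h x \<in> S\<close> less.prems \<open>h x < x\<close>] .
    ultimately show False by simp
  qed
qed

lemma strict_mono_not_bounded:
  fixes h :: "'a::wellorder \<Rightarrow> 'a"
  assumes "strict_mono h"
  shows "\<not> range h \<subseteq> {..<b}"
  using strict_mono_on_ge_self[OF assms, of b] by (meson UNIV_I lessThan_iff not_le rangeI subsetD)

lemma strict_mono_bij_betw_lessThan_le:
  fixes a b :: "'a::wellorder"
  assumes "strict_mono_bij_betw h {..<a} {..<b}"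
  shows "a \<le> b"
proof (rule ccontr)
  assume "\<not> a \<le> b"
  then have "b \<le> h b"
    using assms strict_mono_on_ge_self[of "{..<a}" h b]
    unfolding strict_mono_bij_betw_def by auto
  moreover have "h b < b"
    using assms \<open>\<not> a \<le> b\<close> unfolding strict_mono_bij_betw_def by (auto dest: bij_betwE)
  ultimately show False by simp
qed

lemma otp_eqI:
  fixes S :: "'a::wellorder set"
  assumes "strict_mono_bij_betw f S {..<\<gamma>}"
  shows "otp S = \<gamma>"
  unfolding otp_def
proof (rule the_equality)
  show "\<exists>f. bij_betw f S {..<\<gamma>} \<and> strict_mono_on S f"
    using assms unfolding strict_mono_bij_betw_def by blast
next
  fix \<gamma>' :: 'a assume "\<exists>f. bij_betw f S {..<\<gamma>'} \<and> strict_mono_on S f"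
  then obtain f' where f': "strict_mono_bij_betw f' S {..<\<gamma>'}"
    unfolding strict_mono_bij_betw_def by blast
  have "\<gamma>' \<le> \<gamma>"
    by (rule strict_mono_bij_betw_lessThan_le[OF
          strict_mono_bij_betw_comp[OF strict_mono_bij_betw_the_inv_into[OF f'] assms]])
  moreover have "\<gamma> \<le> \<gamma>'"
    by (rule strict_mono_bij_betw_lessThan_le[OF
          strict_mono_bij_betw_comp[OF strict_mono_bij_betw_the_inv_into[OF assms] f']])
  ultimately show "\<gamma>' = \<gamma>" by simp
qed

lemma Well_order_le: "Well_order {(x::'a::wellorder, y). x \<le> y}"
proof -
  have "{(x::'a, y). x \<le> y} - Id = {(x, y). x < y}" by auto
  then have "wf ({(x::'a, y). x \<le> y} - Id)"
    using wf by (simp add: wf_def)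
  moreover have "Field {(x::'a, y). x \<le> y} = UNIV" by (auto simp: Field_def)
  ultimately show ?thesis
    unfolding well_order_on_def linear_order_on_def partial_order_on_def preorder_on_def
    by (auto simp: refl_on_def trans_def antisym_def total_on_def)
qed

lemma strict_mono_on_if_embed:
  fixes A B :: "'a::wellorder set"
  assumes "embed (Restr {(x, y). x \<le> y} A) (Restr {(x, y). x \<le> y} B) f"
  shows "strict_mono_on A f"
proof -
  let ?r = "Restr {(x::'a, y). x \<le> y} A"
  have "Well_order ?r" using Well_order_Restr[OF Well_order_le] .
  moreover have "Field ?r = A" by (auto simp: Field_def)
  ultimately have "inj_on f A" using embed_inj_on[OF _ assms] by simp
  moreover have "compat ?r (Restr {(x, y). x \<le> y} B) f" using embed_compat[OF assms] .
  ultimately show ?thesis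
    by (intro strict_mono_onI) (auto simp: compat_def order.strict_iff_order dest: inj_onD)
qed

lemma ex_strict_mono_bij_betw_lessThan:
  fixes S :: "'a::wellorder set"
  assumes bounded: "S \<subseteq> {..<b}"
  shows "\<exists>\<gamma>::'a. \<exists>f. strict_mono_bij_betw f S {..<\<gamma>}"
proof -
  let ?L = "{(x::'a, y). x \<le> y}"
  let ?r = "Restr ?L S"
  have L: "Well_order ?L" "Field ?L = UNIV" "Restr ?L UNIV = ?L"
    using Well_order_le by (auto simp: Field_def)
  have r: "Well_order ?r" "Field ?r = S"
    using Well_order_Restr[OF L(1)] by (auto simp: Field_def)
  from wellorders_totally_ordered[OF r(1) L(1)] show ?thesis
  proof
    assume "\<exists>f. embed ?r ?L f"
    then obtain f where embed: "embed ?r ?L f" by blast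
    then have mono: "strict_mono_on S f"
      using strict_mono_on_if_embed[of S UNIV f] L(3) by simp
    have "wo_rel.ofilter ?L (f ` S)"
      using embed_Field_ofilter[OF r(1) L(1) embed] r(2) by simp
    then have "(\<exists>a. f ` S = underS ?L a) \<or> f ` S = UNIV"
      using wo_rel.ofilter_underS_Field[of ?L "f ` S"] L by (simp add: wo_rel_def)
    then show ?thesis
    proof
      assume "\<exists>a. f ` S = underS ?L a"
      moreover have "underS ?L a = {..<a}" for a by (auto simp: underS_def)
      ultimately obtain a where "f ` S = {..<a}" by auto
      then show ?thesis
        using mono strict_mono_on_imp_inj_on[OF mono]
        unfolding strict_mono_bij_betw_def bij_betw_def by blast
    next
      assume "f ` S = UNIV"
      then have "strict_mono_bij_betw f S UNIV"
        using mono strict_mono_on_imp_inj_on[OF mono]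
        unfolding strict_mono_bij_betw_def bij_betw_def by blast
      then have "strict_mono_bij_betw (the_inv_into S f) UNIV S"
        by (rule strict_mono_bij_betw_the_inv_into)
      then have "strict_mono (the_inv_into S f)" "range (the_inv_into S f) \<subseteq> {..<b}"
        using bounded unfolding strict_mono_bij_betw_def bij_betw_def by auto
      then show ?thesis using strict_mono_not_bounded by blast
    qed
  next
    assume "\<exists>f. embed ?L ?r f"
    then obtain f where embed: "embed ?L ?r f" by blast
    then have "strict_mono f"
      using strict_mono_on_if_embed[of UNIV S f] L(3) by simp
    moreover have "range f \<subseteq> {..<b}"
      using embed_Field[OF embed] L(2) r(2) bounded by simp
    ultimately show ?thesis using strict_mono_not_bounded by blast
  qed
qed

lemma otp_eq_if_strict_mono_bij_betw:
  fixes S T :: "'a::wellorder set"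
  assumes iso: "strict_mono_bij_betw h S T" and bounded: "T \<subseteq> {..<b}"
  shows "otp S = otp T"
proof -
  obtain \<gamma> :: 'a and f where f: "strict_mono_bij_betw f T {..<\<gamma>}"
    using ex_strict_mono_bij_betw_lessThan[OF bounded] by blast
  then have "otp T = \<gamma>" by (rule otp_eqI)
  moreover have "otp S = \<gamma>" by (rule otp_eqI[OF strict_mono_bij_betw_comp[OF iso f]])
  ultimately show ?thesis by simp
qed

lemma strict_mono_bij_betw_extend_id:
  fixes A B :: "'a::wellorder set"
  assumes k: "strict_mono_bij_betw k (A \<inter> {..<\<xi>}) (B \<inter> {..<\<xi>})"
    and tail: "A \<inter> {\<xi>..<\<delta>} = B \<inter> {\<xi>..<\<delta>}" and "\<xi> \<le> \<delta>"
  shows "strict_mono_bij_betw (\<lambda>x. if x < \<xi> then k x else x) (A \<inter> {..<\<delta>}) (B \<inter> {..<\<delta>})"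
    (is "strict_mono_bij_betw ?h _ _")
proof -
  have k_into: "k x \<in> B \<inter> {..<\<xi>}" if "x \<in> A \<inter> {..<\<xi>}" for x
    using k that unfolding strict_mono_bij_betw_def by (auto dest: bij_betwE)
  have mono: "strict_mono_on (A \<inter> {..<\<delta>}) ?h"
  proof (rule strict_mono_onI)
    fix x y assume x: "x \<in> A \<inter> {..<\<delta>}" and y: "y \<in> A \<inter> {..<\<delta>}" and "x < y"
    consider "y < \<xi>" | "x < \<xi>" "\<xi> \<le> y" | "\<xi> \<le> x" by (meson not_le)
    then show "?h x < ?h y"
    proof cases
      case 1
      with x y \<open>x < y\<close> have "k x < k y"
        using k unfolding strict_mono_bij_betw_def by (auto intro: strict_mono_onD)
      with 1 \<open>x < y\<close> show ?thesis by (simp add: order.strict_trans)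
    next
      case 2
      with x k_into[of x] show ?thesis by auto
    next
      case 3
      with \<open>x < y\<close> show ?thesis by auto
    qed
  qed
  have split: "X \<inter> {..<\<delta>} = X \<inter> {..<\<xi>} \<union> X \<inter> {\<xi>..<\<delta>}" for X :: "'a set"
    using \<open>\<xi> \<le> \<delta>\<close> by auto
  have "?h ` (A \<inter> {..<\<xi>}) = k ` (A \<inter> {..<\<xi>})" by (rule image_cong) auto
  also have "\<dots> = B \<inter> {..<\<xi>}"
    using k unfolding strict_mono_bij_betw_def by (simp add: bij_betw_def)
  moreover have "?h ` (A \<inter> {\<xi>..<\<delta>}) = A \<inter> {\<xi>..<\<delta>}" by force
  ultimately have "?h ` (A \<inter> {..<\<delta>}) = B \<inter> {..<\<delta>}"
    unfolding split[of A] split[of B] image_Un tail by simp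
  then show ?thesis
    using mono strict_mono_on_imp_inj_on[OF mono]
    unfolding strict_mono_bij_betw_def bij_betw_def by blast
qed

lemma otp_eq_if_tail_eq:
  fixes A B :: "'a::wellorder set"
  assumes "\<xi> \<le> \<delta>" and tail: "A \<inter> {\<xi>..<\<delta>} = B \<inter> {\<xi>..<\<delta>}"
    and head: "otp (A \<inter> {..<\<xi>}) = otp (B \<inter> {..<\<xi>})"
  shows "otp (A \<inter> {..<\<delta>}) = otp (B \<inter> {..<\<delta>})"
proof -
  obtain \<gamma> :: 'a and fA where fA: "strict_mono_bij_betw fA (A \<inter> {..<\<xi>}) {..<\<gamma>}"
    using ex_strict_mono_bij_betw_lessThan[OF Int_lower2] by blast
  obtain \<gamma>' :: 'a and fB where fB: "strict_mono_bij_betw fB (B \<inter> {..<\<xi>}) {..<\<gamma>'}"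
    using ex_strict_mono_bij_betw_lessThan[OF Int_lower2] by blast
  have "\<gamma>' = \<gamma>" using otp_eqI[OF fA] otp_eqI[OF fB] head by simp
  with fB have "strict_mono_bij_betw (the_inv_into (B \<inter> {..<\<xi>}) fB \<circ> fA) (A \<inter> {..<\<xi>}) (B \<inter> {..<\<xi>})"
    using strict_mono_bij_betw_comp[OF fA strict_mono_bij_betw_the_inv_into] by simp
  from strict_mono_bij_betw_extend_id[OF this tail \<open>\<xi> \<le> \<delta>\<close>] show ?thesis
    by (rule otp_eq_if_strict_mono_bij_betw[OF _ Int_lower2])
qed

definition walk_next :: "('a::wellorder \<Rightarrow> 'a set) \<Rightarrow> 'a \<Rightarrow> 'a \<Rightarrow> 'a" where
  "walk_next C \<gamma> \<xi> = (LEAST x. x \<in> C \<gamma> \<and> \<xi> \<le> x)"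

definition cofinal_below :: "'a::order set \<Rightarrow> 'a \<Rightarrow> bool" where
  "cofinal_below S \<delta> \<longleftrightarrow> (\<forall>b<\<delta>. \<exists>c\<in>S. b \<le> c \<and> c < \<delta>)"

lemma Tr_Suc_walk_next:
  "Tr C \<xi> \<gamma> (Suc n) = (if \<xi> < Tr C \<xi> \<gamma> n then walk_next C (Tr C \<xi> \<gamma> n) \<xi> else \<xi>)"
  by (simp add: walk_next_def)

lemma Tr_Suc_eq_Tr_walk_next: "\<xi> < \<gamma> \<Longrightarrow> Tr C \<xi> \<gamma> (Suc n) = Tr C \<xi> (walk_next C \<gamma> \<xi>) n"
  by (induction n) (simp_all only: Tr_Suc_walk_next, simp_all)

lemma Tr_same: "Tr C \<xi> \<xi> n = \<xi>"
  by (induction n) auto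

lemma walk_next_le: "x \<in> C \<gamma> \<Longrightarrow> \<xi> \<le> x \<Longrightarrow> walk_next C \<gamma> \<xi> \<le> x"
  unfolding walk_next_def by (simp add: Least_le)

lemma walk_next_eqI:
  "g \<in> C \<gamma> \<Longrightarrow> \<xi> \<le> g \<Longrightarrow> (\<And>x. x \<in> C \<gamma> \<Longrightarrow> \<xi> \<le> x \<Longrightarrow> g \<le> x) \<Longrightarrow> walk_next C \<gamma> \<xi> = g"
  unfolding walk_next_def by (rule Least_equality) auto

lemma ord_sup_lessThan_ge: "\<xi> < \<gamma> \<Longrightarrow> \<xi> \<le> ord_sup {..<\<gamma>}"
  unfolding ord_sup_def by (rule LeastI2[of _ \<gamma>]) auto

lemma ord_sup_lessThan_acc:
  assumes "\<delta> \<in> acc"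
  shows "ord_sup {..<\<delta>} = \<delta>"
  unfolding ord_sup_def
proof (rule Least_equality)
  fix x assume bound: "\<forall>y\<in>{..<\<delta>}. y \<le> x"
  show "\<delta> \<le> x"
  proof (rule ccontr)
    assume "\<not> \<delta> \<le> x"
    then obtain z where "x < z" "z < \<delta>" using assms unfolding acc_def by (auto simp: not_le)
    moreover from bound \<open>z < \<delta>\<close> have "z \<le> x" by simp
    ultimately show False by simp
  qed
qed auto

(*
  The hypothesis y < \<xi>, which recurs in the lemmas on single walk steps, excludes the least
  ordinal: C 1 may be empty, as ord_sup {} = ord_sup {..<1}.  For \<xi> > 0, a set C \<gamma> lying
  below \<xi> would have supremum \<xi>, so \<xi> would be a limit point of C \<gamma> and thus in C \<gamma>.
*)
lemma C_sequence_ex_ge: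
  fixes C :: "'a::wellorder \<Rightarrow> 'a set"
  assumes cs: "C_sequence C" and "y < \<xi>" and "\<xi> < \<gamma>"
  shows "\<exists>x\<in>C \<gamma>. \<xi> \<le> x"
proof (rule ccontr)
  assume "\<not> ?thesis"
  then have below: "\<forall>x\<in>C \<gamma>. x < \<xi>" by auto
  have closed: "closed_subset (C \<gamma>) \<gamma>" and sup: "ord_sup (C \<gamma>) = ord_sup {..<\<gamma>}"
    using cs by (auto simp: C_sequence_def)
  have "ord_sup (C \<gamma>) \<le> \<xi>"
    unfolding ord_sup_def by (rule Least_le) (use below in auto)
  moreover have "\<xi> \<le> ord_sup (C \<gamma>)"
    using sup ord_sup_lessThan_ge[OF \<open>\<xi> < \<gamma>\<close>] by simp
  ultimately have "ord_sup (C \<gamma>) = \<xi>" by simp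
  then have unbounded: "\<exists>c\<in>C \<gamma>. z < c" if "z < \<xi>" for z
    using not_less_Least[of z "\<lambda>x. \<forall>y\<in>C \<gamma>. y \<le> x"] that
    unfolding ord_sup_def by (auto simp: not_le)
  have "\<xi> \<in> acc"
    unfolding acc_def using \<open>y < \<xi>\<close> unbounded below by blast
  moreover have "\<forall>z<\<xi>. \<exists>c\<in>C \<gamma>. z \<le> c \<and> c < \<xi>"
    using unbounded below by (meson less_imp_le)
  ultimately have "\<xi> \<in> C \<gamma>"
    using closed \<open>\<xi> < \<gamma>\<close> unfolding closed_subset_def by blast
  with below show False by blast
qed

lemma
  fixes C :: "'a::wellorder \<Rightarrow> 'a set"
  assumes "C_sequence C" and "y < \<xi>" and "\<xi> < \<gamma>"
  shows walk_next_mem: "walk_next C \<gamma> \<xi> \<in> C \<gamma>"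
    and walk_next_ge: "\<xi> \<le> walk_next C \<gamma> \<xi>"
    and walk_next_less: "walk_next C \<gamma> \<xi> < \<gamma>"
proof -
  obtain x where "x \<in> C \<gamma>" "\<xi> \<le> x" using C_sequence_ex_ge[OF assms] by blast
  then show mem: "walk_next C \<gamma> \<xi> \<in> C \<gamma>" and "\<xi> \<le> walk_next C \<gamma> \<xi>"
    unfolding walk_next_def by (auto intro: LeastI2[of _ x])
  from mem show "walk_next C \<gamma> \<xi> < \<gamma>"
    using \<open>C_sequence C\<close> by (auto simp: C_sequence_def closed_subset_def)
qed

lemma Tr_reaches:
  fixes C :: "'a::wellorder \<Rightarrow> 'a set"
  assumes cs: "C_sequence C" and "y < \<xi>"
  shows "\<xi> \<le> \<gamma> \<Longrightarrow> \<exists>l. Tr C \<xi> \<gamma> l = \<xi>"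
proof (induction \<gamma> rule: less_induct)
  case (less \<gamma>)
  show ?case
  proof (cases "\<xi> = \<gamma>")
    case True
    then show ?thesis by (metis Tr.simps(1))
  next
    case False
    with less.prems have "\<xi> < \<gamma>" by simp
    then obtain l where "Tr C \<xi> (walk_next C \<gamma> \<xi>) l = \<xi>"
      using less.IH walk_next_less walk_next_ge cs \<open>y < \<xi>\<close> by blast
    then show ?thesis using Tr_Suc_eq_Tr_walk_next[OF \<open>\<xi> < \<gamma>\<close>] by metis
  qed
qed

lemma rho0_same: "rho0 C \<xi> \<xi> = []"
  unfolding rho0_def rho2_def by (simp add: Tr_same)

lemma rho0_Cons:
  fixes C :: "'a::wellorder \<Rightarrow> 'a set"
  assumes cs: "C_sequence C" and "y < \<xi>" and "\<xi> < \<gamma>"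
  shows "rho0 C \<xi> \<gamma> = otp (C \<gamma> \<inter> {..<\<xi>}) # rho0 C \<xi> (walk_next C \<gamma> \<xi>)"
proof -
  let ?g = "walk_next C \<gamma> \<xi>"
  have shift: "Tr C \<xi> \<gamma> (Suc n) = Tr C \<xi> ?g n" for n
    using Tr_Suc_eq_Tr_walk_next[OF \<open>\<xi> < \<gamma>\<close>] .
  obtain l where "Tr C \<xi> ?g l = \<xi>"
    using Tr_reaches[OF cs \<open>y < \<xi>\<close> walk_next_ge[OF assms]] by blast
  then have "Tr C \<xi> \<gamma> (Suc l) = \<xi>" by (simp only: shift)
  moreover have "Tr C \<xi> \<gamma> 0 \<noteq> \<xi>" using \<open>\<xi> < \<gamma>\<close> by simp
  ultimately have "(LEAST n. Tr C \<xi> \<gamma> n = \<xi>) = Suc (LEAST n. Tr C \<xi> \<gamma> (Suc n) = \<xi>)"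
    by (rule Least_Suc)
  then have "rho2 C \<xi> \<gamma> = Suc (rho2 C \<xi> ?g)"
    unfolding rho2_def shift .
  then show ?thesis
    unfolding rho0_def
    by (simp only: upt_conv_Cons[of 0 "Suc (rho2 C \<xi> ?g)"] map_Suc_upt[symmetric])
       (simp del: Tr.simps(2) add: shift comp_def)
qed

lemma rho0_mem:
  fixes C :: "'a::wellorder \<Rightarrow> 'a set"
  assumes "C_sequence C" and "y < \<xi>" and "\<xi> < \<gamma>" and "\<xi> \<in> C \<gamma>"
  shows "rho0 C \<xi> \<gamma> = [otp (C \<gamma> \<inter> {..<\<xi>})]"
proof -
  have "walk_next C \<gamma> \<xi> = \<xi>" by (rule walk_next_eqI) (use \<open>\<xi> \<in> C \<gamma>\<close> in auto)
  then show ?thesis using rho0_Cons[OF assms(1-3)] rho0_same by simp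
qed

lemma length_rho0_eq_1_iff:
  fixes C :: "'a::wellorder \<Rightarrow> 'a set"
  assumes cs: "C_sequence C" and "y < \<xi>" and "\<xi> < \<gamma>"
  shows "length (rho0 C \<xi> \<gamma>) = 1 \<longleftrightarrow> \<xi> \<in> C \<gamma>"
proof (cases "\<xi> \<in> C \<gamma>")
  case True
  then show ?thesis using rho0_mem[OF assms] by simp
next
  case False
  then have "\<xi> < walk_next C \<gamma> \<xi>"
    using walk_next_mem[OF assms] walk_next_ge[OF assms] le_neq_trans by metis
  with False show ?thesis
    using rho0_Cons[OF assms] rho0_Cons[OF cs \<open>y < \<xi>\<close>] by simp
qed

lemma cofinal_below_C_acc:
  fixes C :: "'a::wellorder \<Rightarrow> 'a set"
  assumes "C_sequence C" and "\<delta> \<in> acc"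
  shows "cofinal_below (C \<delta>) \<delta>"
  unfolding cofinal_below_def
proof (intro allI impI)
  fix b assume "b < \<delta>"
  have "C \<delta> \<subseteq> {..<\<delta>}" and "ord_sup (C \<delta>) = \<delta>"
    using assms ord_sup_lessThan_acc by (auto simp: C_sequence_def closed_subset_def)
  moreover have "ord_sup (C \<delta>) \<le> b" if "\<forall>c\<in>C \<delta>. c < b"
    unfolding ord_sup_def by (rule Least_le) (use that in auto)
  ultimately show "\<exists>c\<in>C \<delta>. b \<le> c \<and> c < \<delta>"
    using \<open>b < \<delta>\<close> by (force simp: not_less)
qed

lemma mem_C_if_cofinal_below:
  assumes "C_sequence C" and "\<delta> \<in> acc" and "\<delta> < \<gamma>" and "cofinal_below (C \<gamma>) \<delta>"
  shows "\<delta> \<in> C \<gamma>"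
  using assms unfolding C_sequence_def closed_subset_def cofinal_below_def by blast

lemma rho0_factors_through_cofinal:
  fixes C :: "'a::wellorder \<Rightarrow> 'a set"
  assumes cs: "C_sequence C" and \<delta>: "\<delta> \<in> acc"
  shows "\<delta> \<le> \<gamma> \<Longrightarrow> \<exists>\<epsilon><\<delta>. (\<exists>y. y < \<epsilon>) \<and> (\<exists>\<gamma>' p. \<delta> \<le> \<gamma>' \<and> cofinal_below (C \<gamma>') \<delta> \<and>
           (\<forall>\<xi>\<in>{\<epsilon>..\<delta>}. rho0 C \<xi> \<gamma> = p @ rho0 C \<xi> \<gamma>'))"
proof (induction \<gamma> rule: less_induct)
  case (less \<gamma>)
  show ?case
  proof (cases "cofinal_below (C \<gamma>) \<delta>")
    case True
    obtain y \<epsilon> where "y < \<epsilon>" "\<epsilon> < \<delta>" using \<delta> unfolding acc_def by blast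
    with True less.prems show ?thesis by (metis append.left_neutral)
  next
    case False
    with less.prems cofinal_below_C_acc[OF cs \<delta>] have "\<delta> < \<gamma>"
      using le_neq_trans by blast
    \<comment> \<open>C \<gamma> misses [b, \<delta>), so every \<xi> \<in> [b, \<delta>] takes the same first step as \<delta>\<close>
    from False obtain b where "b < \<delta>" and gap: "\<And>c. c \<in> C \<gamma> \<Longrightarrow> b \<le> c \<Longrightarrow> \<delta> \<le> c"
      unfolding cofinal_below_def by (auto simp: not_less)
    obtain y\<^sub>0 where "y\<^sub>0 < \<delta>" using \<delta> unfolding acc_def by blast
    define g where "g = walk_next C \<gamma> \<delta>"
    have "\<delta> \<le> g" "g < \<gamma>"
      unfolding g_def using walk_next_ge walk_next_less cs \<open>y\<^sub>0 < \<delta>\<close> \<open>\<delta> < \<gamma>\<close> by blast+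
    then obtain \<epsilon> y \<gamma>' p where "\<epsilon> < \<delta>" "y < \<epsilon>" "\<delta> \<le> \<gamma>'" "cofinal_below (C \<gamma>') \<delta>"
      and IH: "\<forall>\<xi>\<in>{\<epsilon>..\<delta>}. rho0 C \<xi> g = p @ rho0 C \<xi> \<gamma>'"
      using less.IH by blast
    have step: "rho0 C \<xi> \<gamma> = otp (C \<gamma> \<inter> {..<\<delta>}) # rho0 C \<xi> g"
      if "\<xi> \<in> {max \<epsilon> b..\<delta>}" for \<xi>
    proof -
      from that have "y < \<xi>" "\<xi> < \<gamma>" using \<open>y < \<epsilon>\<close> \<open>\<delta> < \<gamma>\<close> by auto
      have "walk_next C \<gamma> \<xi> = g"
      proof (rule walk_next_eqI)
        show "g \<in> C \<gamma>" unfolding g_def using walk_next_mem cs \<open>y\<^sub>0 < \<delta>\<close> \<open>\<delta> < \<gamma>\<close> by blast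
        show "\<xi> \<le> g" using that \<open>\<delta> \<le> g\<close> by auto
        fix x assume "x \<in> C \<gamma>" "\<xi> \<le> x"
        with that gap have "\<delta> \<le> x" by auto
        with \<open>x \<in> C \<gamma>\<close> show "g \<le> x" unfolding g_def by (rule walk_next_le)
      qed
      moreover have "C \<gamma> \<inter> {..<\<xi>} = C \<gamma> \<inter> {..<\<delta>}"
        using that gap by (force simp: not_le)
      ultimately show ?thesis using rho0_Cons[OF cs \<open>y < \<xi>\<close> \<open>\<xi> < \<gamma>\<close>] by simp
    qed
    have "\<forall>\<xi>\<in>{max \<epsilon> b..\<delta>}. rho0 C \<xi> \<gamma> = (otp (C \<gamma> \<inter> {..<\<delta>}) # p) @ rho0 C \<xi> \<gamma>'"
      using step IH by simp
    moreover have "max \<epsilon> b < \<delta>" "y < max \<epsilon> b"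
      using \<open>\<epsilon> < \<delta>\<close> \<open>b < \<delta>\<close> \<open>y < \<epsilon>\<close> by (auto simp: less_max_iff_disj)
    ultimately show ?thesis using \<open>\<delta> \<le> \<gamma>'\<close> \<open>cofinal_below (C \<gamma>') \<delta>\<close> by blast
  qed
qed

lemma length_le_if_append_rho0_eq:
  fixes C :: "'a::wellorder \<Rightarrow> 'a set"
  assumes cs: "C_sequence C" and "y < \<xi>" and "\<xi> < \<gamma>\<^sub>1" and "\<xi> < \<gamma>\<^sub>2" and "\<xi> \<in> C \<gamma>\<^sub>1"
    and eq: "p\<^sub>1 @ rho0 C \<xi> \<gamma>\<^sub>1 = p\<^sub>2 @ rho0 C \<xi> \<gamma>\<^sub>2"
  shows "length p\<^sub>2 \<le> length p\<^sub>1"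
proof -
  have "length (rho0 C \<xi> \<gamma>\<^sub>1) = 1"
    using length_rho0_eq_1_iff[OF cs \<open>y < \<xi>\<close> \<open>\<xi> < \<gamma>\<^sub>1\<close>] \<open>\<xi> \<in> C \<gamma>\<^sub>1\<close> by simp
  moreover have "rho0 C \<xi> \<gamma>\<^sub>2 \<noteq> []"
    using rho0_Cons[OF cs \<open>y < \<xi>\<close> \<open>\<xi> < \<gamma>\<^sub>2\<close>] by simp
  moreover have "length p\<^sub>1 + length (rho0 C \<xi> \<gamma>\<^sub>1) = length p\<^sub>2 + length (rho0 C \<xi> \<gamma>\<^sub>2)"
    using arg_cong[OF eq, of length] by simp
  ultimately show ?thesis by (cases "rho0 C \<xi> \<gamma>\<^sub>2") auto
qed

lemma prefix_eq_if_append_rho0_eq: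
  fixes C :: "'a::wellorder \<Rightarrow> 'a set"
  assumes cs: "C_sequence C" and "y < \<epsilon>" and "\<epsilon> < \<delta>" and "\<delta> \<le> \<gamma>\<^sub>1" and "\<delta> \<le> \<gamma>\<^sub>2"
    and cofinal: "cofinal_below (C \<gamma>\<^sub>1) \<delta>" "cofinal_below (C \<gamma>\<^sub>2) \<delta>"
    and eq: "\<forall>\<xi>\<in>{\<epsilon>..<\<delta>}. p\<^sub>1 @ rho0 C \<xi> \<gamma>\<^sub>1 = p\<^sub>2 @ rho0 C \<xi> \<gamma>\<^sub>2"
  shows "p\<^sub>1 = p\<^sub>2"
proof -
  obtain c\<^sub>1 c\<^sub>2 where c: "c\<^sub>1 \<in> C \<gamma>\<^sub>1" "c\<^sub>1 \<in> {\<epsilon>..<\<delta>}" "c\<^sub>2 \<in> C \<gamma>\<^sub>2" "c\<^sub>2 \<in> {\<epsilon>..<\<delta>}"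
    using cofinal \<open>\<epsilon> < \<delta>\<close> unfolding cofinal_below_def by (meson atLeastLessThan_iff)
  have "length p\<^sub>2 \<le> length p\<^sub>1"
    using c \<open>y < \<epsilon>\<close> \<open>\<delta> \<le> \<gamma>\<^sub>1\<close> \<open>\<delta> \<le> \<gamma>\<^sub>2\<close> eq
    by (intro length_le_if_append_rho0_eq[OF cs, of y c\<^sub>1 \<gamma>\<^sub>1 \<gamma>\<^sub>2 p\<^sub>1]) auto
  moreover have "length p\<^sub>1 \<le> length p\<^sub>2"
    using c \<open>y < \<epsilon>\<close> \<open>\<delta> \<le> \<gamma>\<^sub>1\<close> \<open>\<delta> \<le> \<gamma>\<^sub>2\<close> eq
    by (intro length_le_if_append_rho0_eq[OF cs, of y c\<^sub>2 \<gamma>\<^sub>2 \<gamma>\<^sub>1 p\<^sub>2]) auto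
  ultimately show ?thesis
    using eq c by (auto simp: append_eq_append_conv)
qed

lemma C_tail_eq_if_rho0_eq:
  fixes C :: "'a::wellorder \<Rightarrow> 'a set"
  assumes cs: "C_sequence C" and "y < \<epsilon>" and "\<delta> \<le> \<gamma>\<^sub>1" and "\<delta> \<le> \<gamma>\<^sub>2"
    and eq: "\<forall>\<xi>\<in>{\<epsilon>..<\<delta>}. rho0 C \<xi> \<gamma>\<^sub>1 = rho0 C \<xi> \<gamma>\<^sub>2"
  shows "C \<gamma>\<^sub>1 \<inter> {\<epsilon>..<\<delta>} = C \<gamma>\<^sub>2 \<inter> {\<epsilon>..<\<delta>}"
proof -
  have "\<xi> \<in> C \<gamma>\<^sub>1 \<longleftrightarrow> \<xi> \<in> C \<gamma>\<^sub>2" if "\<xi> \<in> {\<epsilon>..<\<delta>}" for \<xi>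
  proof -
    from that have "y < \<xi>" "\<xi> < \<gamma>\<^sub>1" "\<xi> < \<gamma>\<^sub>2"
      using \<open>y < \<epsilon>\<close> \<open>\<delta> \<le> \<gamma>\<^sub>1\<close> \<open>\<delta> \<le> \<gamma>\<^sub>2\<close> by auto
    moreover have "rho0 C \<xi> \<gamma>\<^sub>1 = rho0 C \<xi> \<gamma>\<^sub>2" using eq that by blast
    ultimately show ?thesis
      using length_rho0_eq_1_iff[OF cs] by metis
  qed
  then show ?thesis by blast
qed

lemma otp_eq_if_rho0_eq:
  fixes C :: "'a::wellorder \<Rightarrow> 'a set"
  assumes cs: "C_sequence C" and "y < \<epsilon>" and "\<epsilon> < \<delta>" and "\<delta> \<le> \<gamma>\<^sub>1" and "\<delta> \<le> \<gamma>\<^sub>2"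
    and eq: "\<forall>\<xi>\<in>{\<epsilon>..<\<delta>}. rho0 C \<xi> \<gamma>\<^sub>1 = rho0 C \<xi> \<gamma>\<^sub>2"
  shows "otp (C \<gamma>\<^sub>1 \<inter> {..<\<delta>}) = otp (C \<gamma>\<^sub>2 \<inter> {..<\<delta>})"
proof (rule otp_eq_if_tail_eq)
  show "C \<gamma>\<^sub>1 \<inter> {\<epsilon>..<\<delta>} = C \<gamma>\<^sub>2 \<inter> {\<epsilon>..<\<delta>}"
    using C_tail_eq_if_rho0_eq[OF cs \<open>y < \<epsilon>\<close> \<open>\<delta> \<le> \<gamma>\<^sub>1\<close> \<open>\<delta> \<le> \<gamma>\<^sub>2\<close> eq] .
  have "\<epsilon> < \<gamma>\<^sub>1" "\<epsilon> < \<gamma>\<^sub>2" using \<open>\<epsilon> < \<delta>\<close> \<open>\<delta> \<le> \<gamma>\<^sub>1\<close> \<open>\<delta> \<le> \<gamma>\<^sub>2\<close> by auto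
  \<comment> \<open>the first entry of the walk to \<epsilon> records the order type below \<epsilon>\<close>
  moreover have "rho0 C \<epsilon> \<gamma>\<^sub>1 = rho0 C \<epsilon> \<gamma>\<^sub>2" using eq \<open>\<epsilon> < \<delta>\<close> by simp
  ultimately show "otp (C \<gamma>\<^sub>1 \<inter> {..<\<epsilon>}) = otp (C \<gamma>\<^sub>2 \<inter> {..<\<epsilon>})"
    using rho0_Cons[OF cs \<open>y < \<epsilon>\<close>] by (metis list.inject)
qed (use \<open>\<epsilon> < \<delta>\<close> in simp)

lemma rho0_eq_if_mem_V_cofinal:
  fixes C :: "'a::wellorder \<Rightarrow> 'a set"
  assumes cs: "C_sequence C" and V: "\<delta> \<in> V C" and "y < \<epsilon>" and "\<epsilon> < \<delta>"
    and "\<delta> \<le> \<gamma>\<^sub>1" and "\<delta> \<le> \<gamma>\<^sub>2"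
    and cofinal: "cofinal_below (C \<gamma>\<^sub>1) \<delta>" "cofinal_below (C \<gamma>\<^sub>2) \<delta>"
    and eq: "\<forall>\<xi>\<in>{\<epsilon>..<\<delta>}. rho0 C \<xi> \<gamma>\<^sub>1 = rho0 C \<xi> \<gamma>\<^sub>2"
  shows "rho0 C \<delta> \<gamma>\<^sub>1 = rho0 C \<delta> \<gamma>\<^sub>2"
proof -
  have acc: "\<delta> \<in> acc" using V unfolding V_def by blast
  then obtain y\<^sub>0 where "y\<^sub>0 < \<delta>" unfolding acc_def by blast
  have tail: "C \<gamma>\<^sub>1 \<inter> {\<epsilon>..<\<delta>} = C \<gamma>\<^sub>2 \<inter> {\<epsilon>..<\<delta>}"
    using C_tail_eq_if_rho0_eq[OF cs \<open>y < \<epsilon>\<close> \<open>\<delta> \<le> \<gamma>\<^sub>1\<close> \<open>\<delta> \<le> \<gamma>\<^sub>2\<close> eq] .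
  have "C \<delta> \<inter> {\<epsilon>..<\<delta>} \<noteq> C \<gamma> \<inter> {\<epsilon>..<\<delta>}" if "\<delta> < \<gamma>" for \<gamma>
    using V that \<open>\<epsilon> < \<delta>\<close> unfolding V_def by blast
  with tail consider "\<gamma>\<^sub>1 = \<delta>" "\<gamma>\<^sub>2 = \<delta>" | "\<delta> < \<gamma>\<^sub>1" "\<delta> < \<gamma>\<^sub>2"
    using \<open>\<delta> \<le> \<gamma>\<^sub>1\<close> \<open>\<delta> \<le> \<gamma>\<^sub>2\<close> order.order_iff_strict by metis
  then show ?thesis
  proof cases
    case 2
    then have "rho0 C \<delta> \<gamma>\<^sub>i = [otp (C \<gamma>\<^sub>i \<inter> {..<\<delta>})]" if "\<gamma>\<^sub>i \<in> {\<gamma>\<^sub>1, \<gamma>\<^sub>2}" for \<gamma>\<^sub>i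
      using that cofinal rho0_mem[OF cs \<open>y\<^sub>0 < \<delta>\<close>] mem_C_if_cofinal_below[OF cs acc] by auto
    then show ?thesis
      using otp_eq_if_rho0_eq[OF cs \<open>y < \<epsilon>\<close> \<open>\<epsilon> < \<delta>\<close> \<open>\<delta> \<le> \<gamma>\<^sub>1\<close> \<open>\<delta> \<le> \<gamma>\<^sub>2\<close> eq] by simp
  qed simp
qed

lemma rho0_eq_if_mem_V:
  fixes C :: "'a::wellorder \<Rightarrow> 'a set"
  assumes cs: "C_sequence C" and V: "\<delta> \<in> V C" and "\<delta> \<le> \<alpha>" and "\<delta> \<le> \<beta>"
    and agree: "\<And>\<xi>. \<xi> < \<delta> \<Longrightarrow> rho0 C \<xi> \<alpha> = rho0 C \<xi> \<beta>"
  shows "rho0 C \<delta> \<alpha> = rho0 C \<delta> \<beta>"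
proof -
  have acc: "\<delta> \<in> acc" using V unfolding V_def by blast
  obtain \<epsilon>\<^sub>1 y \<gamma>\<^sub>1 p\<^sub>1 where "\<epsilon>\<^sub>1 < \<delta>" "y < \<epsilon>\<^sub>1" "\<delta> \<le> \<gamma>\<^sub>1" "cofinal_below (C \<gamma>\<^sub>1) \<delta>"
    and walk\<^sub>1: "\<forall>\<xi>\<in>{\<epsilon>\<^sub>1..\<delta>}. rho0 C \<xi> \<alpha> = p\<^sub>1 @ rho0 C \<xi> \<gamma>\<^sub>1"
    using rho0_factors_through_cofinal[OF cs acc \<open>\<delta> \<le> \<alpha>\<close>] by blast
  obtain \<epsilon>\<^sub>2 \<gamma>\<^sub>2 p\<^sub>2 where "\<epsilon>\<^sub>2 < \<delta>" "\<delta> \<le> \<gamma>\<^sub>2" "cofinal_below (C \<gamma>\<^sub>2) \<delta>"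
    and walk\<^sub>2: "\<forall>\<xi>\<in>{\<epsilon>\<^sub>2..\<delta>}. rho0 C \<xi> \<beta> = p\<^sub>2 @ rho0 C \<xi> \<gamma>\<^sub>2"
    using rho0_factors_through_cofinal[OF cs acc \<open>\<delta> \<le> \<beta>\<close>] by blast
  define \<epsilon> where "\<epsilon> = max \<epsilon>\<^sub>1 \<epsilon>\<^sub>2"
  have "y < \<epsilon>" "\<epsilon> < \<delta>" using \<open>y < \<epsilon>\<^sub>1\<close> \<open>\<epsilon>\<^sub>1 < \<delta>\<close> \<open>\<epsilon>\<^sub>2 < \<delta>\<close> by (auto simp: \<epsilon>_def less_max_iff_disj)
  have "p\<^sub>1 @ rho0 C \<xi> \<gamma>\<^sub>1 = p\<^sub>2 @ rho0 C \<xi> \<gamma>\<^sub>2" if "\<xi> \<in> {\<epsilon>..<\<delta>}" for \<xi>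
  proof -
    from that have "\<xi> \<in> {\<epsilon>\<^sub>1..\<delta>}" "\<xi> \<in> {\<epsilon>\<^sub>2..\<delta>}" "\<xi> < \<delta>" by (auto simp: \<epsilon>_def)
    then show ?thesis using walk\<^sub>1 walk\<^sub>2 agree by metis
  qed
  moreover from this have "p\<^sub>1 = p\<^sub>2"
    using prefix_eq_if_append_rho0_eq[OF cs \<open>y < \<epsilon>\<close> \<open>\<epsilon> < \<delta>\<close> \<open>\<delta> \<le> \<gamma>\<^sub>1\<close> \<open>\<delta> \<le> \<gamma>\<^sub>2\<close>
        \<open>cofinal_below (C \<gamma>\<^sub>1) \<delta>\<close> \<open>cofinal_below (C \<gamma>\<^sub>2) \<delta>\<close>] by blast
  ultimately have "rho0 C \<delta> \<gamma>\<^sub>1 = rho0 C \<delta> \<gamma>\<^sub>2"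
    using rho0_eq_if_mem_V_cofinal[OF cs V \<open>y < \<epsilon>\<close> \<open>\<epsilon> < \<delta>\<close> \<open>\<delta> \<le> \<gamma>\<^sub>1\<close> \<open>\<delta> \<le> \<gamma>\<^sub>2\<close>
        \<open>cofinal_below (C \<gamma>\<^sub>1) \<delta>\<close> \<open>cofinal_below (C \<gamma>\<^sub>2) \<delta>\<close>] by simp
  with \<open>p\<^sub>1 = p\<^sub>2\<close> show ?thesis
    using walk\<^sub>1 walk\<^sub>2 \<open>\<epsilon>\<^sub>1 < \<delta>\<close> \<open>\<epsilon>\<^sub>2 < \<delta>\<close> by simp
qed

lemma Delta_lessThan_domains:
  fixes f g :: "'a::wellorder \<Rightarrow> 'b option"
  assumes dom: "dom f = {..<a}" "dom g = {..<b}" and "a \<le> b" and "\<not> f \<subseteq>\<^sub>m g"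
  shows "Delta f g < a" and "f (Delta f g) \<noteq> g (Delta f g)"
    and "\<And>\<xi>. \<xi> < Delta f g \<Longrightarrow> f \<xi> = g \<xi>"
proof -
  define P where "P x \<longleftrightarrow> dom f = {..<x} \<or> dom g = {..<x} \<or> (x \<in> dom f \<inter> dom g \<and> f x \<noteq> g x)"
    for x
  have Delta: "Delta f g = (LEAST x. P x)" unfolding Delta_def P_def ..
  obtain \<xi>\<^sub>0 where "\<xi>\<^sub>0 \<in> dom f" "f \<xi>\<^sub>0 \<noteq> g \<xi>\<^sub>0" using \<open>\<not> f \<subseteq>\<^sub>m g\<close> unfolding map_le_def by blast
  then have "P \<xi>\<^sub>0" and "\<xi>\<^sub>0 < a" unfolding P_def using dom \<open>a \<le> b\<close> by auto
  then show "Delta f g < a"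
    unfolding Delta using Least_le[of P \<xi>\<^sub>0] by simp
  then show "f (Delta f g) \<noteq> g (Delta f g)"
    using LeastI[of P, OF \<open>P \<xi>\<^sub>0\<close>] dom \<open>a \<le> b\<close> unfolding Delta P_def by auto
  show "f \<xi> = g \<xi>" if "\<xi> < Delta f g" for \<xi>
    using not_less_Least[of \<xi> P] that \<open>Delta f g < a\<close> dom \<open>a \<le> b\<close> unfolding Delta P_def
    by auto
qed

theorem lemma5p1:
  fixes C :: "'a::wellorder \<Rightarrow> 'a set" and \<alpha> \<beta> :: 'a
  assumes "regular_uncountable_cardinal_type TYPE('a)"
    and "C_sequence C"
    and "\<alpha> < \<beta>"
    and "\<not> (rho0_fiber C \<alpha> \<subseteq>\<^sub>m rho0_fiber C \<beta>)"
    and "\<not> (rho0_fiber C \<beta> \<subseteq>\<^sub>m rho0_fiber C \<alpha>)"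
  shows "Delta (rho0_fiber C \<alpha>) (rho0_fiber C \<beta>) \<notin> V C"
proof
  define \<delta> where "\<delta> = Delta (rho0_fiber C \<alpha>) (rho0_fiber C \<beta>)"
  assume "\<delta> \<in> V C"
  have "dom (rho0_fiber C \<gamma>) = {..<\<gamma>}" for \<gamma>
    by (auto simp: rho0_fiber_def split: if_splits)
  note Delta = Delta_lessThan_domains[OF this this less_imp_le[OF \<open>\<alpha> < \<beta>\<close>] assms(4),
      folded \<delta>_def, unfolded rho0_fiber_def]
  have "\<delta> < \<alpha>" "\<delta> < \<beta>" using Delta(1) \<open>\<alpha> < \<beta>\<close> by auto
  then have "rho0 C \<delta> \<alpha> \<noteq> rho0 C \<delta> \<beta>" using Delta(2) by simp
  moreover have "rho0 C \<delta> \<alpha> = rho0 C \<delta> \<beta>"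
  proof (rule rho0_eq_if_mem_V[OF assms(2) \<open>\<delta> \<in> V C\<close>])
    show "\<delta> \<le> \<alpha>" "\<delta> \<le> \<beta>" using \<open>\<delta> < \<alpha>\<close> \<open>\<delta> < \<beta>\<close> by simp_all
    show "rho0 C \<xi> \<alpha> = rho0 C \<xi> \<beta>" if "\<xi> < \<delta>" for \<xi>
      using Delta(3)[OF that] that \<open>\<delta> < \<alpha>\<close> \<open>\<delta> < \<beta>\<close> by (simp add: order.strict_trans)
  qed
  ultimately show False by contradiction
qed

end
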